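(* Assume $G$ is strongly connected, $r=1$ (neutral drift), and $C\subseteq V$ with $F_C>0$. Let $P_{\min,t}=\min_{i\in V}P_{i,t|C}$. Then $$\frac{1}{F_C}\sum_{t=1}^{\infty}t\,\big(P_{\min,t}-P_{\min,t-1}\big)\;\le\;\frac{1}{F_C}\sum_{t=1}^{\infty}t\,\big(F_{t|C}-F_{t-1|C}\big)=t_C .$$
   Context: Let $G=(V,E)$ be a finite directed graph with $N=|V|$ vertices and weight matrix $W=[w_{ij}]$, $w_{ij}>0$ iff $(i,j)\in E$, $\sum_j w_{ij}=1$ for all $i$. A configuration is a set of mutants. In the neutral-drift birth–death process started from configuration $C$ at time $0$, at each step a vertex $i$ is selected uniformly at random, then $j$ is chosen with probability $w_{ij}$ and $j$ takes the type of $i$. $P_{i,t|C}$ is the probability that $i$ is a mutant at time $t$. $F_{t|C}$ is the probability that all vertices are mutants at time $t$ (fixation has occurred by time $t$), $F_C=\lim_{t\to\infty}F_{t|C}$ is the fixation probability, and $t_C=\frac{1}{F_C}\sum_{t\ge1}t(F_{t|C}-F_{t-1|C})$ is the mean time to fixation conditioned on fixation. *)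

theory Defs
  imports Complex_Main
begin

text \<open>Vertices: a finite type 'v (V = UNIV, N = CARD('v)). Weight matrix W :: 'v => 'v => real.
Configurations: sets of mutant vertices.\<close>

definition weight_matrix :: "('v::finite \<Rightarrow> 'v \<Rightarrow> real) \<Rightarrow> bool" where
  "weight_matrix W \<longleftrightarrow> (\<forall>i j. W i j \<ge> 0) \<and> (\<forall>i. (\<Sum>j\<in>UNIV. W i j) = 1)"

definition edges_of :: "('v \<Rightarrow> 'v \<Rightarrow> real) \<Rightarrow> ('v \<times> 'v) set" where
  "edges_of W = {(i, j). W i j > 0}"

definition strongly_connected :: "('v \<Rightarrow> 'v \<Rightarrow> real) \<Rightarrow> bool" where
  "strongly_connected W \<longleftrightarrow> (\<forall>i j. (i, j) \<in> (edges_of W)\<^sup>*)"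

text \<open>Birth-death update: i reproduces onto j (neutral drift, r = 1).\<close>
definition bd_update :: "'v set \<Rightarrow> 'v \<Rightarrow> 'v \<Rightarrow> 'v set" where
  "bd_update S i j = (if i \<in> S then insert j S else S - {j})"

definition trans_prob :: "('v::finite \<Rightarrow> 'v \<Rightarrow> real) \<Rightarrow> 'v set \<Rightarrow> 'v set \<Rightarrow> real" where
  "trans_prob W S S' =
     (\<Sum>i\<in>UNIV. \<Sum>j\<in>UNIV. (1 / real (card (UNIV :: 'v set))) * W i j * (if bd_update S i j = S' then 1 else 0))"

fun config_dist :: "('v::finite \<Rightarrow> 'v \<Rightarrow> real) \<Rightarrow> 'v set \<Rightarrow> nat \<Rightarrow> 'v set \<Rightarrow> real" where
  "config_dist W C 0 S = (if S = C then 1 else 0)"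
| "config_dist W C (Suc t) S = (\<Sum>S0\<in>UNIV. config_dist W C t S0 * trans_prob W S0 S)"

definition mutant_prob :: "('v::finite \<Rightarrow> 'v \<Rightarrow> real) \<Rightarrow> 'v set \<Rightarrow> 'v \<Rightarrow> nat \<Rightarrow> real" where
  "mutant_prob W C i t = (\<Sum>S\<in>UNIV. if i \<in> S then config_dist W C t S else 0)"

definition min_mutant_prob :: "('v::finite \<Rightarrow> 'v \<Rightarrow> real) \<Rightarrow> 'v set \<Rightarrow> nat \<Rightarrow> real" where
  "min_mutant_prob W C t = Min ((\<lambda>i. mutant_prob W C i t) ` UNIV)"

definition fix_by :: "('v::finite \<Rightarrow> 'v \<Rightarrow> real) \<Rightarrow> 'v set \<Rightarrow> nat \<Rightarrow> real" where
  "fix_by W C t = config_dist W C t UNIV"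

definition fix_prob :: "('v::finite \<Rightarrow> 'v \<Rightarrow> real) \<Rightarrow> 'v set \<Rightarrow> real" where
  "fix_prob W C = lim (fix_by W C)"

text \<open>t_C = (1/F_C) * sum_{t>=1} t (F_t - F_{t-1}); the index n stands for t = n+1.\<close>
definition fix_time :: "('v::finite \<Rightarrow> 'v \<Rightarrow> real) \<Rightarrow> 'v set \<Rightarrow> real" where
  "fix_time W C = (1 / fix_prob W C) *
     (\<Sum>n. real (Suc n) * (fix_by W C (Suc n) - fix_by W C n))"

end

theory Submission
  imports Defs
begin

text \<open>
  The configurations \<open>{}\<close> and \<open>UNIV\<close> are absorbing. In a strongly connected graph some
  edge leaves any nonempty proper mutant set, and reproducing along it adds a mutant, so
  every nonempty configuration fixates within \<open>N\<close> steps with positive probability. Hence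
  the probability \<open>q\<^sub>t\<close> of still being in a transient configuration at time \<open>t\<close> decays
  geometrically. Since \<open>F\<^sub>t \<le> P\<^sub>m\<^sub>i\<^sub>n\<^sub>,\<^sub>t \<le> F\<^sub>t + q\<^sub>t\<close>, the difference
  \<open>d\<^sub>t = P\<^sub>m\<^sub>i\<^sub>n\<^sub>,\<^sub>t - F\<^sub>t\<close> is nonnegative and geometrically small, and summation by
  parts gives \<open>\<Sum>\<^sub>t t (d\<^sub>t - d\<^sub>t\<^sub>-\<^sub>1) = - \<Sum>\<^sub>t d\<^sub>t \<le> 0\<close>.
\<close>

lemma summable_Suc_times_power:
  fixes r :: real
  assumes "\<bar>r\<bar> < 1"
  shows "summable (\<lambda>n. real (Suc n) * r ^ n)"
  using termdiff_converges[of r 1 "\<lambda>_. 1"] assms by (simp add: diffs_def summable_geometric)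

lemma summable_Suc_times_if_geometric_bound:
  fixes x :: "nat \<Rightarrow> real"
  assumes bound: "\<And>n. \<bar>x n\<bar> \<le> K * \<rho> ^ n" and "0 \<le> \<rho>" "\<rho> < 1"
  shows "summable (\<lambda>n. real (Suc n) * x n)"
proof (rule summable_comparison_test)
  show "summable (\<lambda>n. K * (real (Suc n) * \<rho> ^ n))"
    using assms by (intro summable_mult summable_Suc_times_power) simp
  show "\<exists>N. \<forall>n\<ge>N. norm (real (Suc n) * x n) \<le> K * (real (Suc n) * \<rho> ^ n)"
    using bound by (auto simp: abs_mult mult.left_commute intro: mult_left_mono)
qed

lemma sums_Suc_times_diff_if_geometric_bound:
  fixes d :: "nat \<Rightarrow> real"
  assumes bound: "\<And>n. \<bar>d n\<bar> \<le> K * \<rho> ^ n" and "0 \<le> \<rho>" "\<rho> < 1"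
  shows "(\<lambda>n. real (Suc n) * (d (Suc n) - d n)) sums - (\<Sum>n. d n)"
proof -
  have partial_sums: "(\<Sum>n<M. real (Suc n) * (d (Suc n) - d n)) = real M * d M - (\<Sum>n<M. d n)" for M
    by (induction M) (simp_all add: algebra_simps)
  have "(\<lambda>M. real M * d M) \<longlonglongrightarrow> 0"
  proof (rule tendsto_0_le)
    show "(\<lambda>M. real (Suc M) * \<rho> ^ M) \<longlonglongrightarrow> 0"
      using assms by (intro summable_LIMSEQ_zero summable_Suc_times_power) simp
    show "\<forall>\<^sub>F M in sequentially. norm (real M * d M) \<le> norm (real (Suc M) * \<rho> ^ M) * K"
    proof (intro always_eventually allI)
      fix M
      have "real M * \<bar>d M\<bar> \<le> real (Suc M) * (K * \<rho> ^ M)"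
        using bound[of M] by (intro mult_mono) auto
      then show "norm (real M * d M) \<le> norm (real (Suc M) * \<rho> ^ M) * K"
        using \<open>0 \<le> \<rho>\<close> by (simp add: abs_mult algebra_simps)
    qed
  qed
  moreover have "summable d"
    using assms by (intro summable_comparison_test[OF _ summable_mult[OF summable_geometric]]) auto
  ultimately show ?thesis
    unfolding sums_def partial_sums using summable_LIMSEQ tendsto_diff by fastforce
qed

lemma suminf_Suc_times_diff_le_if_geometric_gap:
  fixes x y :: "nat \<Rightarrow> real"
  assumes below: "\<And>n. y n \<le> x n" and gap: "\<And>n. x n \<le> y n + K * \<rho> ^ n"
    and "0 \<le> \<rho>" "\<rho> < 1" and y_summable: "summable (\<lambda>n. real (Suc n) * (y (Suc n) - y n))"
  shows "summable (\<lambda>n. real (Suc n) * (x (Suc n) - x n))"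
    and "(\<Sum>n. real (Suc n) * (x (Suc n) - x n)) \<le> (\<Sum>n. real (Suc n) * (y (Suc n) - y n))"
proof -
  define d where "d n = x n - y n" for n
  have d_bound: "\<bar>d n\<bar> \<le> K * \<rho> ^ n" for n
    using below[of n] gap[of n] by (simp add: d_def)
  have "summable d"
    using d_bound \<open>0 \<le> \<rho>\<close> \<open>\<rho> < 1\<close>
    by (intro summable_comparison_test[OF _ summable_mult[OF summable_geometric[of \<rho>], of K]]) auto
  then have "0 \<le> (\<Sum>n. d n)"
    by (rule suminf_nonneg) (use below in \<open>simp add: d_def\<close>)
  have "(\<lambda>n. real (Suc n) * (x (Suc n) - x n))
      sums ((\<Sum>n. real (Suc n) * (y (Suc n) - y n)) - (\<Sum>n. d n))"
    using sums_add[OF summable_sums[OF y_summable]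
        sums_Suc_times_diff_if_geometric_bound[OF d_bound \<open>0 \<le> \<rho>\<close> \<open>\<rho> < 1\<close>]]
    by (simp add: d_def algebra_simps)
  then show "summable (\<lambda>n. real (Suc n) * (x (Suc n) - x n))"
    and "(\<Sum>n. real (Suc n) * (x (Suc n) - x n)) \<le> (\<Sum>n. real (Suc n) * (y (Suc n) - y n))"
    using \<open>0 \<le> (\<Sum>n. d n)\<close> by (auto simp: sums_iff)
qed

lemma geometric_bound_if_periodic_contraction:
  fixes x :: "nat \<Rightarrow> real"
  assumes "0 < N" "0 < \<sigma>" "\<sigma> < 1"
    and le_1: "\<And>n. x n \<le> 1" and contraction: "\<And>n. x (n + N) \<le> \<sigma> * x n"
  obtains \<rho> where "0 \<le> \<rho>" "\<rho> < 1" "\<And>n. x n \<le> \<rho> ^ n / \<sigma>"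
proof
  define \<rho> where "\<rho> = root N \<sigma>"
  show "0 \<le> \<rho>" "\<rho> < 1"
    using assms by (auto simp: \<rho>_def real_root_lt_1_iff)
  have \<rho>_pow_N: "\<rho> ^ N = \<sigma>"
    using assms by (simp add: \<rho>_def real_root_pow_pos)
  have blocks: "x (k * N + r) \<le> \<sigma> ^ k" for k r
  proof (induction k)
    case 0
    show ?case using le_1 by simp
  next
    case (Suc k)
    have "x (Suc k * N + r) \<le> \<sigma> * x (k * N + r)"
      using contraction[of "k * N + r"] by (simp add: algebra_simps)
    also have "\<dots> \<le> \<sigma> * \<sigma> ^ k"
      using Suc \<open>0 < \<sigma>\<close> by (intro mult_left_mono) auto
    finally show ?case by simp
  qed
  fix n
  have "\<rho> ^ (N * (n div N)) * \<sigma> \<le> \<rho> ^ (N * (n div N)) * \<rho> ^ (n mod N)"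
    using \<open>0 < \<sigma>\<close> \<open>\<rho> < 1\<close> \<open>0 \<le> \<rho>\<close> \<open>0 < N\<close>
    by (intro mult_left_mono) (auto simp: \<rho>_pow_N[symmetric] intro: power_decreasing)
  then have "\<rho> ^ (N * (n div N)) \<le> \<rho> ^ n / \<sigma>"
    using \<open>0 < \<sigma>\<close> by (simp add: field_simps flip: power_add)
  moreover have "x n \<le> \<rho> ^ (N * (n div N))"
    using blocks[of "n div N" "n mod N"] by (simp add: power_mult \<rho>_pow_N mult.commute)
  ultimately show "x n \<le> \<rho> ^ n / \<sigma>" by linarith
qed

lemma trans_prob_nonneg: "weight_matrix W \<Longrightarrow> 0 \<le> trans_prob W S S'"
  unfolding trans_prob_def weight_matrix_def by (intro sum_nonneg) auto

lemma sum_weights_div_card: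
  fixes W :: "'v::finite \<Rightarrow> 'v \<Rightarrow> real"
  assumes "weight_matrix W"
  shows "(\<Sum>i\<in>UNIV. \<Sum>j\<in>UNIV. W i j / real (card (UNIV :: 'v set))) = 1"
  using assms by (simp add: weight_matrix_def flip: sum_divide_distrib)

lemma trans_prob_sum:
  fixes W :: "'v::finite \<Rightarrow> 'v \<Rightarrow> real"
  assumes "weight_matrix W"
  shows "(\<Sum>S'\<in>UNIV. trans_prob W S S') = 1"
proof -
  have "(\<Sum>S'\<in>UNIV. trans_prob W S S')
      = (\<Sum>i\<in>UNIV. \<Sum>j\<in>UNIV. \<Sum>S'\<in>UNIV.
          W i j / real (card (UNIV :: 'v set)) * (if bd_update S i j = S' then 1 else 0))"
    unfolding trans_prob_def by (subst sum.swap, subst (2) sum.swap) simp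
  also have "\<dots> = 1"
    using sum_weights_div_card[OF assms] by (simp add: if_distrib cong: if_cong)
  finally show ?thesis .
qed

lemma trans_prob_le_1: "weight_matrix W \<Longrightarrow> trans_prob W S S' \<le> 1"
  using member_le_sum[of S' UNIV "trans_prob W S"] trans_prob_sum[of W S] trans_prob_nonneg[of W S]
  by auto

lemma trans_prob_bd_update_ge:
  fixes W :: "'v::finite \<Rightarrow> 'v \<Rightarrow> real"
  assumes "weight_matrix W"
  shows "W i j / real (card (UNIV :: 'v set)) \<le> trans_prob W S (bd_update S i j)"
proof -
  let ?g = "\<lambda>i' j'. 1 / real (card (UNIV :: 'v set)) * W i' j'
    * (if bd_update S i' j' = bd_update S i j then 1 else 0)"
  have nonneg: "0 \<le> ?g i' j'" for i' j'
    using assms by (auto simp: weight_matrix_def)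
  have "?g i j \<le> (\<Sum>j'\<in>UNIV. ?g i j')"
    by (rule member_le_sum) (use nonneg in auto)
  also have "\<dots> \<le> (\<Sum>i'\<in>UNIV. \<Sum>j'\<in>UNIV. ?g i' j')"
    by (rule member_le_sum[where f = "\<lambda>i'. \<Sum>j'\<in>UNIV. ?g i' j'"])
      (use nonneg in \<open>auto intro: sum_nonneg\<close>)
  finally show ?thesis unfolding trans_prob_def by simp
qed

lemma trans_prob_UNIV: "weight_matrix W \<Longrightarrow> trans_prob W UNIV S' = (if S' = UNIV then 1 else 0)"
  using sum_weights_div_card[of W] by (auto simp: trans_prob_def bd_update_def)

lemma trans_prob_empty: "weight_matrix W \<Longrightarrow> trans_prob W {} S' = (if S' = {} then 1 else 0)"
  using sum_weights_div_card[of W] by (auto simp: trans_prob_def bd_update_def)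

lemma config_dist_nonneg: "weight_matrix W \<Longrightarrow> 0 \<le> config_dist W C n S"
  by (induction n arbitrary: S) (auto intro!: sum_nonneg mult_nonneg_nonneg trans_prob_nonneg)

lemma config_dist_sum: "weight_matrix W \<Longrightarrow> (\<Sum>S\<in>UNIV. config_dist W C n S) = 1"
proof (induction n)
  case (Suc n)
  have "(\<Sum>S\<in>UNIV. config_dist W C (Suc n) S)
      = (\<Sum>S0\<in>UNIV. \<Sum>S\<in>UNIV. config_dist W C n S0 * trans_prob W S0 S)"
    unfolding config_dist.simps by (rule sum.swap)
  also have "\<dots> = (\<Sum>S0\<in>UNIV. config_dist W C n S0 * (\<Sum>S\<in>UNIV. trans_prob W S0 S))"
    by (simp add: sum_distrib_left)
  finally show ?case using Suc by (simp add: trans_prob_sum)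
qed simp

lemma config_dist_add:
  "config_dist W C (n + m) S = (\<Sum>S0\<in>UNIV. config_dist W C n S0 * config_dist W S0 m S)"
proof (induction m arbitrary: S)
  case (Suc m)
  have "config_dist W C (n + Suc m) S
      = (\<Sum>S1\<in>UNIV. \<Sum>S0\<in>UNIV. config_dist W C n S0 * config_dist W S0 m S1 * trans_prob W S1 S)"
    by (simp add: Suc sum_distrib_right)
  also have "\<dots>
      = (\<Sum>S0\<in>UNIV. \<Sum>S1\<in>UNIV. config_dist W C n S0 * config_dist W S0 m S1 * trans_prob W S1 S)"
    by (rule sum.swap)
  also have "\<dots> = (\<Sum>S0\<in>UNIV. config_dist W C n S0 * config_dist W S0 (Suc m) S)"
    by (simp add: sum_distrib_left mult.assoc)
  finally show ?case .
qed (simp add: if_distrib cong: if_cong)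

lemma config_dist_Suc_first:
  "config_dist W C (Suc m) S = (\<Sum>S1\<in>UNIV. trans_prob W C S1 * config_dist W S1 m S)"
  using config_dist_add[of W C 1 m S] by (simp add: if_distrib[where f = "\<lambda>c. c * _"] cong: if_cong)

lemma config_dist_UNIV: "weight_matrix W \<Longrightarrow> config_dist W UNIV m S = (if S = UNIV then 1 else 0)"
  by (induction m arbitrary: S)
    (simp_all add: if_distrib[where f = "\<lambda>c. c * _"] trans_prob_UNIV cong: if_cong)

lemma config_dist_empty: "weight_matrix W \<Longrightarrow> config_dist W {} m S = (if S = {} then 1 else 0)"
  by (induction m arbitrary: S)
    (simp_all add: if_distrib[where f = "\<lambda>c. c * _"] trans_prob_empty cong: if_cong)

lemma rtrancl_leaves_set:
  assumes "(a, b) \<in> r\<^sup>*" "a \<in> S" "b \<notin> S"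
  shows "\<exists>x y. (x, y) \<in> r \<and> x \<in> S \<and> y \<notin> S"
  using assms by (induction rule: rtrancl_induct) auto

lemma config_dist_fixation_pos:
  fixes W :: "'v::finite \<Rightarrow> 'v \<Rightarrow> real"
  assumes W: "weight_matrix W" and "strongly_connected W"
    and "S \<noteq> {}" "card (- S) \<le> k"
  shows "0 < config_dist W S k UNIV"
  using assms(3,4)
proof (induction k arbitrary: S)
  case 0
  then have "S = UNIV" by auto
  then show ?case using config_dist_UNIV[OF W] by simp
next
  case (Suc k)
  show ?case
  proof (cases "S = UNIV")
    case True
    then show ?thesis using config_dist_UNIV[OF W, of "Suc k" UNIV] by (simp del: config_dist.simps)
  next
    case False
    then obtain a b where "a \<in> S" "b \<notin> S" using \<open>S \<noteq> {}\<close> by auto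
    moreover have "(a, b) \<in> (edges_of W)\<^sup>*"
      using \<open>strongly_connected W\<close> by (simp add: strongly_connected_def)
    ultimately obtain i j where "W i j > 0" "i \<in> S" "j \<notin> S"
      using rtrancl_leaves_set[of a b "edges_of W" S] by (auto simp: edges_of_def)
    then have update: "bd_update S i j = insert j S"
      by (simp add: bd_update_def)
    have "card (- insert j S) < card (- S)"
      using \<open>j \<notin> S\<close> by (intro psubset_card_mono) auto
    then have "0 < config_dist W (insert j S) k UNIV"
      using Suc by simp
    moreover have "0 < W i j / real (card (UNIV :: 'v set))"
      using \<open>W i j > 0\<close> by (simp add: finite_UNIV_card_ge_0)
    then have "0 < trans_prob W S (insert j S)"
      using trans_prob_bd_update_ge[OF W, of i j S] update by simp
    moreover have "trans_prob W S (insert j S) * config_dist W (insert j S) k UNIV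
        \<le> config_dist W S (Suc k) UNIV"
      unfolding config_dist_Suc_first
      by (rule member_le_sum[where f = "\<lambda>S1. trans_prob W S S1 * config_dist W S1 k UNIV"])
        (auto intro: mult_nonneg_nonneg trans_prob_nonneg[OF W] config_dist_nonneg[OF W])
    ultimately show ?thesis
      by (meson mult_pos_pos order_less_le_trans)
  qed
qed

definition transient_configs :: "'v set set" where
  "transient_configs = {S. S \<noteq> {} \<and> S \<noteq> UNIV}"

definition transient_mass :: "('v::finite \<Rightarrow> 'v \<Rightarrow> real) \<Rightarrow> 'v set \<Rightarrow> nat \<Rightarrow> real" where
  "transient_mass W C n = (\<Sum>S\<in>transient_configs. config_dist W C n S)"

lemma transient_mass_le_1: "weight_matrix W \<Longrightarrow> transient_mass W C n \<le> 1"
  using sum_mono2[of UNIV transient_configs "config_dist W C n"] config_dist_nonneg[of W C n]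
    config_dist_sum[of W C n]
  by (simp add: transient_mass_def)

lemma transient_mass_le_1_minus_fixation:
  assumes "weight_matrix W"
  shows "transient_mass W C n \<le> 1 - config_dist W C n UNIV"
proof -
  have "transient_mass W C n \<le> (\<Sum>S\<in>UNIV - {UNIV}. config_dist W C n S)"
    unfolding transient_mass_def
    by (rule sum_mono2) (auto simp: transient_configs_def intro: config_dist_nonneg[OF assms])
  also have "\<dots> = 1 - config_dist W C n UNIV"
    using sum.remove[of UNIV UNIV "config_dist W C n"] config_dist_sum[OF assms, of C n] by simp
  finally show ?thesis .
qed

lemma transient_mass_absorbed:
  assumes "weight_matrix W" "S \<notin> transient_configs"
  shows "transient_mass W S n = 0"
  using assms by (auto simp: transient_mass_def transient_configs_def config_dist_UNIV config_dist_empty)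

lemma transient_mass_contraction:
  fixes W :: "'v::finite \<Rightarrow> 'v \<Rightarrow> real"
  assumes W: "weight_matrix W" and "strongly_connected W"
  obtains \<sigma> where "0 < \<sigma>" "\<sigma> < 1"
    "\<And>C n. transient_mass W C (n + card (UNIV :: 'v set)) \<le> \<sigma> * transient_mass W C n"
proof
  let ?N = "card (UNIV :: 'v set)"
  \<comment> \<open>\<open>insert 1\<close> avoids \<open>Min {}\<close> when there is a single vertex; the \<open>max\<close> below keeps \<open>\<sigma> > 0\<close>.\<close>
  define \<delta> where "\<delta> = Min (insert 1 ((\<lambda>S. config_dist W S ?N UNIV) ` transient_configs))"
  have "0 < config_dist W S ?N UNIV" if "S \<in> transient_configs" for S
    using that config_dist_fixation_pos[OF assms, of S ?N] card_mono[of UNIV "- S"]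
    by (auto simp: transient_configs_def)
  then have "0 < \<delta>"
    unfolding \<delta>_def by (subst Min_gr_iff) auto
  define \<sigma> where "\<sigma> = max (1 - \<delta>) (1/2)"
  show "0 < \<sigma>" "\<sigma> < 1"
    using \<open>0 < \<delta>\<close> by (auto simp: \<sigma>_def)
  have start: "transient_mass W S ?N \<le> \<sigma>" if "S \<in> transient_configs" for S
  proof -
    have "\<delta> \<le> config_dist W S ?N UNIV"
      unfolding \<delta>_def using that by (intro Min_le) auto
    then show ?thesis
      using transient_mass_le_1_minus_fixation[OF W, of S ?N] by (simp add: \<sigma>_def)
  qed
  fix C n
  have "transient_mass W C (n + ?N)
      = (\<Sum>S0\<in>UNIV. \<Sum>S\<in>transient_configs. config_dist W C n S0 * config_dist W S0 ?N S)"
    unfolding transient_mass_def config_dist_add by (rule sum.swap)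
  also have "\<dots> = (\<Sum>S0\<in>UNIV. config_dist W C n S0 * transient_mass W S0 ?N)"
    by (simp add: transient_mass_def sum_distrib_left)
  also have "\<dots> \<le> (\<Sum>S0\<in>transient_configs. config_dist W C n S0 * \<sigma>)"
  proof -
    have "config_dist W C n S0 * transient_mass W S0 ?N
        \<le> (if S0 \<in> transient_configs then config_dist W C n S0 * \<sigma> else 0)" for S0
      using start[of S0] transient_mass_absorbed[OF W, of S0 ?N] config_dist_nonneg[OF W, of C n S0]
      by (auto intro: mult_left_mono)
    then have "(\<Sum>S0\<in>UNIV. config_dist W C n S0 * transient_mass W S0 ?N)
        \<le> (\<Sum>S0\<in>UNIV. if S0 \<in> transient_configs then config_dist W C n S0 * \<sigma> else 0)"
      by (rule sum_mono)
    also have "\<dots> = (\<Sum>S0\<in>transient_configs. config_dist W C n S0 * \<sigma>)"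
      by (simp flip: sum.inter_restrict)
    finally show ?thesis .
  qed
  also have "\<dots> = \<sigma> * transient_mass W C n"
    by (simp add: transient_mass_def sum_distrib_left mult.commute)
  finally show "transient_mass W C (n + ?N) \<le> \<sigma> * transient_mass W C n" .
qed

lemma fix_by_Suc:
  assumes "weight_matrix W"
  shows "fix_by W C (Suc n)
    = fix_by W C n + (\<Sum>S\<in>transient_configs. config_dist W C n S * trans_prob W S UNIV)"
proof -
  have "fix_by W C (Suc n) = (\<Sum>S\<in>UNIV. config_dist W C n S * trans_prob W S UNIV)"
    by (simp add: fix_by_def)
  also have "\<dots> = (\<Sum>S\<in>UNIV. (if S = UNIV then config_dist W C n S else 0)
      + (if S \<in> transient_configs then config_dist W C n S * trans_prob W S UNIV else 0))"
    using assms by (intro sum.cong) (auto simp: transient_configs_def trans_prob_UNIV trans_prob_empty)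
  also have "\<dots> = fix_by W C n + (\<Sum>S\<in>transient_configs. config_dist W C n S * trans_prob W S UNIV)"
    by (simp add: sum.distrib fix_by_def flip: sum.inter_restrict)
  finally show ?thesis .
qed

lemma fix_by_increment_bounds:
  assumes W: "weight_matrix W"
  shows "0 \<le> fix_by W C (Suc n) - fix_by W C n"
    and "fix_by W C (Suc n) - fix_by W C n \<le> transient_mass W C n"
  unfolding fix_by_Suc[OF W] transient_mass_def
  by (auto intro!: sum_nonneg sum_mono mult_nonneg_nonneg config_dist_nonneg[OF W]
      trans_prob_nonneg[OF W] mult_left_le trans_prob_le_1[OF W])

lemma mutant_prob_bounds:
  assumes W: "weight_matrix W"
  shows "fix_by W C n \<le> mutant_prob W C i n"
    and "mutant_prob W C i n \<le> fix_by W C n + transient_mass W C n"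
proof -
  show "fix_by W C n \<le> mutant_prob W C i n"
    using member_le_sum[of UNIV UNIV "\<lambda>S. if i \<in> S then config_dist W C n S else 0"]
    by (simp add: mutant_prob_def fix_by_def config_dist_nonneg[OF W])
  have "mutant_prob W C i n \<le> (\<Sum>S\<in>UNIV. (if S = UNIV then config_dist W C n S else 0)
      + (if S \<in> transient_configs then config_dist W C n S else 0))"
    unfolding mutant_prob_def
    by (intro sum_mono) (auto simp: transient_configs_def config_dist_nonneg[OF W])
  also have "\<dots> = fix_by W C n + transient_mass W C n"
    by (simp add: sum.distrib fix_by_def transient_mass_def flip: sum.inter_restrict)
  finally show "mutant_prob W C i n \<le> fix_by W C n + transient_mass W C n" .
qed

lemma min_mutant_prob_bounds:
  assumes "weight_matrix W"
  shows "fix_by W C n \<le> min_mutant_prob W C n"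
    and "min_mutant_prob W C n \<le> fix_by W C n + transient_mass W C n"
proof -
  show "fix_by W C n \<le> min_mutant_prob W C n"
    unfolding min_mutant_prob_def using mutant_prob_bounds(1)[OF assms] by simp
  have "min_mutant_prob W C n \<le> mutant_prob W C i n" for i
    unfolding min_mutant_prob_def by (rule Min_le) auto
  then show "min_mutant_prob W C n \<le> fix_by W C n + transient_mass W C n"
    using mutant_prob_bounds(2)[OF assms] order_trans by blast
qed

theorem theorem7:
  fixes W :: "'v::finite \<Rightarrow> 'v \<Rightarrow> real" and C :: "'v set"
  assumes "weight_matrix W"
    and "strongly_connected W"
    and "fix_prob W C > 0"
  shows "summable (\<lambda>n. real (Suc n) * (min_mutant_prob W C (Suc n) - min_mutant_prob W C n)) \<and>
         summable (\<lambda>n. real (Suc n) * (fix_by W C (Suc n) - fix_by W C n)) \<and>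
         (1 / fix_prob W C) *
           (\<Sum>n. real (Suc n) * (min_mutant_prob W C (Suc n) - min_mutant_prob W C n))
         \<le> (1 / fix_prob W C) *
           (\<Sum>n. real (Suc n) * (fix_by W C (Suc n) - fix_by W C n)) \<and>
         (1 / fix_prob W C) *
           (\<Sum>n. real (Suc n) * (fix_by W C (Suc n) - fix_by W C n)) = fix_time W C"
proof -
  let ?F = "fix_by W C" and ?P = "min_mutant_prob W C"
  obtain \<sigma> where "0 < \<sigma>" "\<sigma> < 1"
    and "\<And>n. transient_mass W C (n + card (UNIV :: 'v set)) \<le> \<sigma> * transient_mass W C n"
    using transient_mass_contraction[OF assms(1,2)] by metis
  then obtain \<rho> where \<rho>: "0 \<le> \<rho>" "\<rho> < 1"
    and decay: "\<And>n. transient_mass W C n \<le> 1 / \<sigma> * \<rho> ^ n"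
    using geometric_bound_if_periodic_contraction[of "card (UNIV :: 'v set)" \<sigma> "transient_mass W C"]
      transient_mass_le_1[OF assms(1)] by (auto simp: finite_UNIV_card_ge_0)
  have "\<bar>?F (Suc n) - ?F n\<bar> \<le> 1 / \<sigma> * \<rho> ^ n" for n
    using fix_by_increment_bounds[OF assms(1), of C n] decay[of n] by simp
  then have F_summable: "summable (\<lambda>n. real (Suc n) * (?F (Suc n) - ?F n))"
    using \<rho> by (rule summable_Suc_times_if_geometric_bound)
  have "?F n \<le> ?P n" "?P n \<le> ?F n + 1 / \<sigma> * \<rho> ^ n" for n
    using min_mutant_prob_bounds[OF assms(1), of C n] decay[of n] by auto
  note P_vs_F = suminf_Suc_times_diff_le_if_geometric_gap[OF this \<rho> F_summable]
  have "1 / fix_prob W C * (\<Sum>n. real (Suc n) * (?P (Suc n) - ?P n))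
      \<le> 1 / fix_prob W C * (\<Sum>n. real (Suc n) * (?F (Suc n) - ?F n))"
    using P_vs_F(2) assms(3) by (intro mult_left_mono) auto
  then show ?thesis
    using P_vs_F(1) F_summable unfolding fix_time_def by blast
qed

end
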